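(* Let $n\ge 2$ and let $\mathcal{P}(Q_{4n})$ be the power graph of the generalized quaternion group $Q_{4n}$. Then $-3\sqrt2$ is an eigenvalue of the Sombor matrix of $\mathcal{P}(Q_{4n})$ with multiplicity at least $n$.
   Context: For a finite simple graph $\Gamma$ with vertices $u_1,\dots,u_N$, the Sombor matrix $S(\Gamma)$ has $(i,j)$ entry $\sqrt{\deg(u_i)^2+\deg(u_j)^2}$ if $u_i,u_j$ are adjacent and $0$ otherwise. $Q_{4n}=\langle a,b: a^{2n}=e,\ a^n=b^2,\ ba=a^{-1}b\rangle$. The power graph $\mathcal{P}(G)$ of a group $G$ has vertex set $G$, two distinct vertices $x,y$ being adjacent iff $x\in\langle y\rangle$ or $y\in\langle x\rangle$. *)

theory Defs
  imports "HOL-Algebra.Generated_Groups" "Jordan_Normal_Form.Char_Poly"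
begin

definition power_adj :: "('g, 'b) monoid_scheme \<Rightarrow> 'g \<Rightarrow> 'g \<Rightarrow> bool" where
  "power_adj G x y \<longleftrightarrow> x \<in> carrier G \<and> y \<in> carrier G \<and> x \<noteq> y \<and>
     (x \<in> generate G {y} \<or> y \<in> generate G {x})"

definition gdeg :: "'a set \<Rightarrow> ('a \<Rightarrow> 'a \<Rightarrow> bool) \<Rightarrow> 'a \<Rightarrow> nat" where
  "gdeg V E x = card {y \<in> V. E x y}"

definition sombor_matrix :: "'a set \<Rightarrow> ('a \<Rightarrow> 'a \<Rightarrow> bool) \<Rightarrow> (nat \<Rightarrow> 'a) \<Rightarrow> real mat" where
  "sombor_matrix V E u = mat (card V) (card V) (\<lambda>(i, j).
      if E (u i) (u j) then sqrt (real (gdeg V E (u i))^2 + real (gdeg V E (u j))^2) else 0)"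

text \<open>Generalized quaternion group Q_{4n}: a group of order 4n generated by a, b
  subject to a^(2n) = e, a^n = b^2, b a = a^(-1) b (any such group is isomorphic
  to the presented group, which has order 4n).\<close>
definition is_gen_quaternion :: "('g, 'b) monoid_scheme \<Rightarrow> nat \<Rightarrow> bool" where
  "is_gen_quaternion G n \<longleftrightarrow> group G \<and> finite (carrier G) \<and> card (carrier G) = 4 * n \<and>
     (\<exists>a\<in>carrier G. \<exists>b\<in>carrier G. generate G {a, b} = carrier G \<and>
        a [^]\<^bsub>G\<^esub> (2 * n) = \<one>\<^bsub>G\<^esub> \<and> a [^]\<^bsub>G\<^esub> n = b [^]\<^bsub>G\<^esub> (2::nat) \<and>
        b \<otimes>\<^bsub>G\<^esub> a = inv\<^bsub>G\<^esub> a \<otimes>\<^bsub>G\<^esub> b)"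

end

theory Submission
  imports Defs "HOL-Algebra.Multiplicative_Group"
begin

text \<open>In \<open>Q\<^sub>4\<^sub>n\<close> every element \<open>a\<^sup>i b\<close> outside \<open>\<langle>a\<rangle>\<close> generates \<open>{1, a\<^sup>i b, a\<^sup>n, a\<^sup>i\<^sup>+\<^sup>n b}\<close>
  and lies in no cyclic subgroup other than its own, so its neighbours in the power graph are
  exactly \<open>1\<close>, \<open>a\<^sup>n\<close> and \<open>a\<^sup>i\<^sup>+\<^sup>n b\<close>. Hence \<open>a\<^sup>i b\<close> and \<open>a\<^sup>i\<^sup>+\<^sup>n b\<close> are adjacent twins of degree 3,
  and for adjacent twins \<open>p\<close>, \<open>q\<close> of degree \<open>d\<close> the vector \<open>e\<^sub>p - e\<^sub>q\<close> is an eigenvector of the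
  Sombor matrix for \<open>-\<surd>(d\<^sup>2 + d\<^sup>2) = -d\<surd>2\<close>. The \<open>n\<close> pairs \<open>{a\<^sup>k b, a\<^sup>k\<^sup>+\<^sup>n b}\<close>, \<open>0 \<le> k < n\<close>, are
  disjoint, so these eigenvectors complete to a unitriangular change of basis, which splits off
  \<open>(X + 3\<surd>2)\<^sup>n\<close> from the characteristic polynomial.\<close>

lemma char_poly_dvd_of_eigencolumns:
  fixes A P :: "'a :: field mat"
  assumes A: "A \<in> carrier_mat N N" and P: "P \<in> carrier_mat N N" and detP: "det P \<noteq> 0"
    and S: "S \<subseteq> {..<N}"
    and eig: "\<And>i j. i < N \<Longrightarrow> j \<in> S \<Longrightarrow> (A * P) $$ (i, j) = c * P $$ (i, j)"
  shows "[:-c, 1:] ^ card S dvd char_poly A"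
proof -
  txt \<open>Write \<open>(X I - A) P = C D\<close> with \<open>D\<close> diagonal, carrying the factor \<open>X - c\<close> of every column in \<open>S\<close>.\<close>
  interpret const_poly: comm_ring_hom "\<lambda>x :: 'a. [:x:]"
    by unfold_locales (simp_all add: one_pCons)
  define q where "q = [:-c, 1:]"
  define M where "M = char_poly_matrix A"
  define PP where "PP = map_mat (\<lambda>x. [:x:]) P"
  define C where "C = mat N N (\<lambda>(i, j). if j \<in> S then [:P $$ (i, j):] else (M * PP) $$ (i, j))"
  define D where "D = mat N N (\<lambda>(i, j). if i = j then if j \<in> S then q else 1 else 0)"
  have M: "M \<in> carrier_mat N N" and PP: "PP \<in> carrier_mat N N"
    and C: "C \<in> carrier_mat N N" and D: "D \<in> carrier_mat N N"
    using A P by (simp_all add: M_def PP_def C_def D_def)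
  have "M = [:0, 1:] \<cdot>\<^sub>m 1\<^sub>m N + map_mat (\<lambda>x. [:x:]) (- A)"
    using A by (auto simp: M_def char_poly_matrix_def)
  then have MPP: "M * PP = [:0, 1:] \<cdot>\<^sub>m PP + map_mat (\<lambda>x. [:x:]) (- A * P)"
    using A P by (simp add: PP_def add_mult_distrib_mat[of _ N N] mult_smult_assoc_mat[of _ N N]
        map_poly_mult(1)[of "- A" N N P N] del: uminus_mult_left_mat)
  have MPP_col: "(M * PP) $$ (i, j) = [:P $$ (i, j):] * q" if "i < N" "j \<in> S" for i j
    using that S P A eig[OF that] unfolding MPP by (auto simp: PP_def q_def algebra_simps)
  have "M * PP = C * D"
  proof (rule eq_matI)
    fix i j assume "i < dim_row (C * D)" "j < dim_col (C * D)"
    then have ij: "i < N" "j < N" using C D by auto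
    have "(C * D) $$ (i, j) = (\<Sum>l<N. C $$ (i, l) * D $$ (l, j))"
      using C D ij by (simp add: scalar_prod_def lessThan_atLeast0)
    also have "\<dots> = C $$ (i, j) * D $$ (j, j)"
      using ij by (simp add: D_def if_distrib sum.If_cases)
    also have "\<dots> = (M * PP) $$ (i, j)"
      using ij MPP_col[OF ij(1)] by (auto simp: C_def D_def)
    finally show "(M * PP) $$ (i, j) = (C * D) $$ (i, j)" ..
  qed (use M PP C D in auto)
  then have "char_poly A * [:det P:] = det C * det D"
    using det_mult[OF M PP] det_mult[OF C D] by (simp add: char_poly_def M_def PP_def)
  also have "det D = q ^ card S"
  proof -
    have "det D = (\<Prod>i<N. if i \<in> S then q else 1)"
      using D by (subst det_upper_triangular) (auto simp: D_def prod_list_diag_prod lessThan_atLeast0)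
    also have "\<dots> = q ^ card S"
      using S by (simp add: prod.If_cases Int_absorb1)
    finally show ?thesis .
  qed
  finally have "q ^ card S dvd char_poly A * [:det P:]" by simp
  then show ?thesis
    unfolding dvd_mult_unit_iff[OF is_unit_triv[OF detP]] q_def .
qed

lemma order_char_poly_ge_of_difference_eigenvectors:
  fixes A :: "'a :: field mat" and x y :: "nat \<Rightarrow> nat"
  assumes A: "A \<in> carrier_mat N N"
    and xy: "\<And>k. k < m \<Longrightarrow> x k < y k \<and> y k < N"
    and inj: "inj_on x {..<m}"
    and yx: "\<And>k l. k < m \<Longrightarrow> l < m \<Longrightarrow> y k \<noteq> x l"
    and eig: "\<And>k r. k < m \<Longrightarrow> r < N \<Longrightarrow> A $$ (r, x k) - A $$ (r, y k)
      = c * (of_bool (r = x k) - of_bool (r = y k))"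
  shows "m \<le> order c (char_poly A)"
proof -
  txt \<open>\<open>P\<close> has column \<open>e\<^bsub>x k\<^esub> - e\<^bsub>y k\<^esub>\<close> at \<open>x k\<close> and unit columns elsewhere; it is lower
    unitriangular because \<open>x k < y k\<close>.\<close>
  define P where "P = mat N N (\<lambda>(i, j).
    if i = j then 1 else if \<exists>k<m. j = x k \<and> i = y k then - 1 else (0 :: 'a))"
  have P: "P \<in> carrier_mat N N" by (simp add: P_def)
  have P_col: "P $$ (l, x k) = of_bool (l = x k) - of_bool (l = y k)"
    if "k < m" "l < N" for k l
  proof -
    have "(\<exists>k'<m. x k = x k' \<and> l = y k') \<longleftrightarrow> l = y k"
      using inj that(1) by (auto simp: inj_on_def)
    then show ?thesis using that xy[OF that(1)] by (auto simp: P_def)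
  qed
  have "det P = 1"
  proof -
    have "det P = prod_list (diag_mat P)"
      by (rule det_lower_triangular[OF _ P]) (use xy in \<open>fastforce simp: P_def\<close>)
    also have "\<dots> = 1"
      using P by (auto simp: prod_list_diag_prod P_def intro: prod.neutral)
    finally show ?thesis .
  qed
  have AP: "(A * P) $$ (i, x k) = c * P $$ (i, x k)" if "i < N" "k < m" for i k
  proof -
    have "(A * P) $$ (i, x k) = (\<Sum>l<N. A $$ (i, l) * P $$ (l, x k))"
      using A P that xy[OF that(2)] by (simp add: scalar_prod_def lessThan_atLeast0)
    also have "\<dots> = A $$ (i, x k) - A $$ (i, y k)"
      using xy[OF that(2)] by (simp add: P_col that(2) right_diff_distrib sum_subtractf)
    finally show ?thesis using eig[OF that(2,1)] P_col[OF that(2,1)] by simp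
  qed
  have "[:-c, 1:] ^ card (x ` {..<m}) dvd char_poly A"
    by (rule char_poly_dvd_of_eigencolumns[OF A P]) (use \<open>det P = 1\<close> xy AP in \<open>force+\<close>)
  then show ?thesis
    using degree_monic_char_poly[OF A] inj by (auto simp: order_divides card_image)
qed

definition adjacent_twins :: "'a set \<Rightarrow> ('a \<Rightarrow> 'a \<Rightarrow> bool) \<Rightarrow> 'a \<Rightarrow> 'a \<Rightarrow> bool" where
  "adjacent_twins V E p q \<longleftrightarrow>
     p \<in> V \<and> q \<in> V \<and> E p q \<and> E q p \<and> (\<forall>w \<in> V - {p, q}. E w p \<longleftrightarrow> E w q)"

lemma adjacent_twins_commute: "adjacent_twins V E p q \<longleftrightarrow> adjacent_twins V E q p"
  by (auto simp: adjacent_twins_def)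

lemma sombor_matrix_twin_columns:
  assumes u: "bij_betw u {..<card V} V" and irrefl: "\<And>x. \<not> E x x"
    and twins: "adjacent_twins V E (u i) (u j)"
    and deg: "gdeg V E (u i) = d" "gdeg V E (u j) = d"
    and ijr: "i < card V" "j < card V" "r < card V"
  shows "sombor_matrix V E u $$ (r, i) - sombor_matrix V E u $$ (r, j)
    = - (sqrt 2 * d) * (of_bool (r = i) - of_bool (r = j))"
proof -
  have weight: "sqrt (real d ^ 2 + real d ^ 2) = sqrt 2 * d"
    by (simp flip: mult_2 add: real_sqrt_mult)
  have "i \<noteq> j" using twins irrefl by (auto simp: adjacent_twins_def)
  moreover have "u r \<in> V - {u i, u j}" if "r \<noteq> i" "r \<noteq> j"
    using u ijr that by (auto simp: bij_betw_def inj_on_eq_iff)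
  ultimately show ?thesis
    using twins irrefl ijr deg weight by (auto simp: sombor_matrix_def adjacent_twins_def)
qed

lemma order_char_poly_sombor_ge_twin_pairs:
  fixes p q :: "nat \<Rightarrow> 'a"
  assumes u: "bij_betw u {..<card V} V" and irrefl: "\<And>x. \<not> E x x"
    and twins: "\<And>k. k < m \<Longrightarrow> adjacent_twins V E (p k) (q k)"
    and deg: "\<And>k. k < m \<Longrightarrow> gdeg V E (p k) = d" "\<And>k. k < m \<Longrightarrow> gdeg V E (q k) = d"
    and disjoint: "\<And>k l. k < m \<Longrightarrow> l < m \<Longrightarrow> k \<noteq> l \<Longrightarrow> {p k, q k} \<inter> {p l, q l} = {}"
  shows "m \<le> order (- (sqrt 2 * d)) (char_poly (sombor_matrix V E u))"
proof -
  define N where "N = card V"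
  define v where "v = inv_into {..<N} u"
  have v: "bij_betw v V {..<N}" and uv: "\<And>z. z \<in> V \<Longrightarrow> u (v z) = z"
    using u by (simp_all add: v_def N_def bij_betw_inv_into bij_betw_inv_into_right)
  define x where "x k = min (v (p k)) (v (q k))" for k
  define y where "y k = max (v (p k)) (v (q k))" for k
  have pq: "p k \<in> V" "q k \<in> V" "p k \<noteq> q k" if "k < m" for k
    using twins[OF that] irrefl by (auto simp: adjacent_twins_def)
  have xy_pair: "{u (x k), u (y k)} = {p k, q k}" if "k < m" for k
    using pq[OF that] uv by (auto simp: x_def y_def min_def max_def)
  have xy: "x k < y k \<and> y k < N" if "k < m" for k
  proof -
    have "v (p k) \<noteq> v (q k)"
      using pq[OF that] v by (auto simp: bij_betw_def inj_on_eq_iff)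
    moreover have "v (p k) < N" "v (q k) < N"
      using pq[OF that] v by (auto simp: bij_betw_def)
    ultimately show ?thesis by (auto simp: x_def y_def)
  qed
  have same_pair: "k = l" if "k < m" "l < m" "u i \<in> {p k, q k}" "u i \<in> {p l, q l}" for i k l
    using disjoint that by blast
  show ?thesis
  proof (rule order_char_poly_ge_of_difference_eigenvectors)
    show "sombor_matrix V E u \<in> carrier_mat N N"
      by (simp add: sombor_matrix_def N_def)
    show "inj_on x {..<m}"
      using xy_pair by (intro inj_onI) (metis insertI1 lessThan_iff same_pair)
    show "y k \<noteq> x l" if "k < m" "l < m" for k l
      using xy_pair xy that same_pair by (metis insertI1 insert_commute less_irrefl)
    show "sombor_matrix V E u $$ (r, x k) - sombor_matrix V E u $$ (r, y k)
      = - (sqrt 2 * d) * (of_bool (r = x k) - of_bool (r = y k))" if "k < m" "r < N" for k r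
    proof (rule sombor_matrix_twin_columns[OF u irrefl])
      show "adjacent_twins V E (u (x k)) (u (y k))"
        using twins[OF \<open>k < m\<close>] xy_pair[OF \<open>k < m\<close>] pq[OF \<open>k < m\<close>]
        by (auto simp: doubleton_eq_iff adjacent_twins_commute)
      show "gdeg V E (u (x k)) = d" "gdeg V E (u (y k)) = d"
        using xy_pair[OF \<open>k < m\<close>] deg[OF \<open>k < m\<close>] by (auto simp: doubleton_eq_iff)
    qed (use xy[OF that(1)] that in \<open>auto simp: N_def\<close>)
  qed (use xy in auto)
qed

lemma power_adj_commute: "power_adj G x y \<longleftrightarrow> power_adj G y x"
  by (auto simp: power_adj_def)

lemma power_adj_irrefl: "\<not> power_adj G x x"
  by (simp add: power_adj_def)

locale gen_quaternion_group = group G for G (structure) +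
  fixes a b and n :: nat
  assumes a: "a \<in> carrier G" and b: "b \<in> carrier G"
    and generated: "generate G {a, b} = carrier G"
    and finite_carrier: "finite (carrier G)" and card_carrier: "card (carrier G) = 4 * n"
    and a_pow_2n: "a [^] (2 * n) = \<one>" and a_pow_n: "a [^] n = b [^] (2::nat)"
    and b_mult_a: "b \<otimes> a = inv a \<otimes> b"
begin

definition apow :: "int \<Rightarrow> 'a" where "apow i = a [^] i"
definition apowb :: "int \<Rightarrow> 'a" where "apowb i = apow i \<otimes> b"

lemma apow_closed [simp]: "apow i \<in> carrier G" and apowb_closed [simp]: "apowb i \<in> carrier G"
  using a b by (simp_all add: apow_def apowb_def)

lemma apow_0 [simp]: "apow 0 = \<one>"
  by (simp add: apow_def)

lemma n_pos: "n > 0"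
  using card_carrier finite_carrier one_closed by (cases n) auto

lemma apow_mult: "apow i \<otimes> apow j = apow (i + j)"
  using a by (simp add: apow_def int_pow_mult)

lemma apow_2n: "apow (2 * int n) = \<one>"
proof -
  have "apow (int (2 * n)) = \<one>"
    using a a_pow_2n by (simp only: apow_def int_pow_int)
  then show ?thesis by simp
qed

lemma b_mult_b: "b \<otimes> b = apow n"
  using a_pow_n b by (simp add: apow_def int_pow_int numeral_2_eq_2)

text \<open>Conjugation by \<open>b\<close> is an automorphism inverting \<open>a\<close>, hence inverting every power of \<open>a\<close>.\<close>
lemma b_mult_apow: "b \<otimes> apow i = apow (- i) \<otimes> b"
proof -
  define conj where "conj x = b \<otimes> x \<otimes> inv b" for x
  have hom: "conj \<in> hom G G"
    using b by (intro homI) (simp_all add: conj_def m_assoc inv_solve_left)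
  have "conj a = inv a"
    using a b by (simp add: conj_def b_mult_a m_assoc)
  then have "conj (apow i) = apow (- i)"
    using hom_int_pow[OF hom a is_group is_group, of i] a by (simp add: apow_def int_pow_inv int_pow_neg)
  moreover have "b \<otimes> apow i = conj (apow i) \<otimes> b"
    using b by (simp add: conj_def m_assoc)
  ultimately show ?thesis by simp
qed

lemma apow_mult_apowb: "apow i \<otimes> apowb j = apowb (i + j)"
  using b by (simp add: apowb_def apow_mult flip: m_assoc)

lemma apowb_mult_apow: "apowb i \<otimes> apow j = apowb (i - j)"
  using b by (simp add: apowb_def m_assoc b_mult_apow) (simp add: apow_mult flip: m_assoc)

lemma apowb_mult_apowb: "apowb i \<otimes> apowb j = apow (i - j + n)"
proof -
  have "apowb i \<otimes> apowb j = (apowb i \<otimes> apow j) \<otimes> b"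
    using b by (simp add: apowb_def m_assoc)
  also have "\<dots> = apow (i - j) \<otimes> (b \<otimes> b)"
    using b by (simp only: apowb_mult_apow) (simp add: apowb_def m_assoc)
  finally show ?thesis by (simp add: b_mult_b apow_mult)
qed

lemma inv_apow: "inv (apow i) = apow (- i)"
  using a by (simp add: apow_def int_pow_neg)

lemma inv_apowb: "inv (apowb i) = apowb (i + n)"
  by (rule inv_equality) (simp_all add: apowb_mult_apowb apow_2n)

lemma carrier_eq: "carrier G = range apow \<union> range apowb"
proof
  have generators: "a = apow 1" "b = apowb 0"
    using a b by (simp_all add: apow_def apowb_def)
  show "carrier G \<subseteq> range apow \<union> range apowb"
  proof
    fix x assume "x \<in> carrier G"
    then show "x \<in> range apow \<union> range apowb"
      unfolding generated[symmetric]
    proof induct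
      case one
      show ?case by (metis UnI1 apow_0 rangeI)
    next
      case (incl x)
      then show ?case using generators by auto
    next
      case (inv x)
      have "inv a = apow (- 1)" "inv b = apowb n"
        using inv_apow[of 1] inv_apowb[of 0] by (simp_all flip: generators)
      then show ?case using inv by auto
    next
      case (eng x y)
      then show ?case by (auto simp: apow_mult apow_mult_apowb apowb_mult_apow apowb_mult_apowb)
    qed
  qed
  show "range apow \<union> range apowb \<subseteq> carrier G"
    by (simp add: image_subset_iff)
qed

text \<open>The cosets \<open>\<langle>a\<rangle>\<close> and \<open>\<langle>a\<rangle>b\<close> cover the \<open>4n\<close> elements, each has \<open>ord a \<le> 2n\<close> elements,
  so both bounds are tight.\<close>
lemma ord_a_and_disjoint: "ord a = 2 * n \<and> range apow \<inter> range apowb = {}"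
proof -
  have card_apow: "card (range apow) = ord a"
    using a by (simp add: generate_pow_card generate_pow apow_def full_SetCompr_eq)
  have "ord a dvd 2 * n"
    using a a_pow_2n by (simp add: pow_eq_id)
  then have ord_le: "ord a \<le> 2 * n"
    using n_pos by (simp add: dvd_imp_le)
  have fin: "finite (range apow)" "finite (range apowb)"
    using finite_carrier carrier_eq by (simp_all add: finite_subset)
  have "range apowb = (\<lambda>x. x \<otimes> b) ` range apow"
    by (auto simp: apowb_def)
  then have card_apowb: "card (range apowb) \<le> ord a"
    using card_apow card_image_le[OF fin(1)] by simp
  have "4 * n + card (range apow \<inter> range apowb) = card (range apow) + card (range apowb)"
    using card_Un_Int[OF fin] carrier_eq card_carrier by simp
  then have "ord a = 2 * n" "card (range apow \<inter> range apowb) = 0"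
    using card_apow card_apowb ord_le by linarith+
  then show ?thesis
    using fin by simp
qed

lemma apow_eq_iff: "apow i = apow j \<longleftrightarrow> i mod (2 * int n) = j mod (2 * int n)"
proof -
  have "apow i = apow j \<longleftrightarrow> 2 * int n dvd j - i"
    using a ord_a_and_disjoint by (simp add: apow_def int_pow_eq)
  then show ?thesis
    by (simp add: mod_eq_dvd_iff dvd_diff_commute[of _ j i])
qed

lemma apowb_eq_iff: "apowb i = apowb j \<longleftrightarrow> i mod (2 * int n) = j mod (2 * int n)"
  using b by (simp add: apowb_def apow_eq_iff)

lemma apow_ne_apowb [simp]: "apow i \<noteq> apowb j" and apowb_ne_apow [simp]: "apowb j \<noteq> apow i"
  using ord_a_and_disjoint by blast+

lemma one_ne_apowb [simp]: "\<one> \<noteq> apowb i" and apowb_ne_one [simp]: "apowb i \<noteq> \<one>"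
  using apow_ne_apowb[of 0 i] by (simp_all del: apow_ne_apowb)

lemma apow_n_ne_one: "apow n \<noteq> \<one>"
  using n_pos apow_eq_iff[of n 0] by simp

lemma apowb_ne_apowb_add_n: "apowb i \<noteq> apowb (i + n)"
proof
  assume "apowb i = apowb (i + n)"
  then have "2 * int n dvd int n"
    by (simp add: apowb_eq_iff mod_eq_dvd_iff)
  then show False
    using n_pos zdvd_imp_le[of "2 * int n" "int n"] by simp
qed

lemma generate_apow_subset: "generate G {apow i} \<subseteq> range apow"
  using a by (auto simp: generate_pow apow_def int_pow_pow)

lemma generate_apowb: "generate G {apowb i} = {\<one>, apowb i, apow n, apowb (i + n)}"
proof
  let ?s = "apowb i"
  have square: "?s \<otimes> ?s = apow n"
    by (simp add: apowb_mult_apowb)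
  have cube: "apow n \<otimes> ?s = apowb (i + n)" and fourth: "apowb (i + n) \<otimes> ?s = \<one>"
    by (simp_all add: apow_mult_apowb apowb_mult_apowb apow_2n add.commute)
  have "?s [^] k \<in> {\<one>, ?s, apow n, apowb (i + n)}" for k :: nat
  proof (induction k)
    case (Suc k)
    with square cube fourth show ?case
      by (elim insertE) simp_all
  qed simp
  then show "generate G {?s} \<subseteq> {\<one>, ?s, apow n, apowb (i + n)}"
    using finite_carrier by (auto simp: generate_pow_on_finite_carrier)
  have s: "?s \<in> generate G {?s}"
    by (simp add: generate.incl)
  then have "apow n \<in> generate G {?s}"
    using generate.eng[OF s s] square by simp
  then have "apowb (i + n) \<in> generate G {?s}"
    using generate.eng[OF _ s] cube by metis
  then show "{\<one>, ?s, apow n, apowb (i + n)} \<subseteq> generate G {?s}"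
    using s \<open>apow n \<in> generate G {?s}\<close> generate.one by auto
qed

lemma apowb_add_n_add_n: "apowb (i + int n + int n) = apowb i"
  by (simp add: apowb_eq_iff)

lemma apowb_eq_apowb_add_n_swap:
  fixes i j :: int
  assumes "apowb i = apowb (j + n)"
  shows "apowb j = apowb (i + n)"
proof -
  have "apowb (i + n) = apow n \<otimes> apowb i"
    by (simp add: apow_mult_apowb add.commute)
  also have "\<dots> = apow n \<otimes> apowb (j + n)"
    by (simp only: assms)
  also have "\<dots> = apowb (j + n + n)"
    by (simp add: apow_mult_apowb ac_simps)
  finally show ?thesis
    by (simp only: apowb_add_n_add_n)
qed

lemma power_adj_apowb_iff: "power_adj G (apowb i) w \<longleftrightarrow> w \<in> {\<one>, apow n, apowb (i + n)}"
proof
  assume "power_adj G (apowb i) w"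
  then have w: "w \<in> carrier G" "w \<noteq> apowb i"
    and "w \<in> generate G {apowb i} \<or> apowb i \<in> generate G {w}"
    by (auto simp: power_adj_def)
  then consider "w \<in> generate G {apowb i}" | "apowb i \<in> generate G {w}"
    by blast
  then show "w \<in> {\<one>, apow n, apowb (i + n)}"
  proof cases
    case 1
    then show ?thesis using w(2) by (simp add: generate_apowb)
  next
    case 2
    obtain j where "w = apow j \<or> w = apowb j"
      using w(1) carrier_eq by blast
    then show ?thesis
    proof
      assume "w = apow j"
      then have "apowb i \<in> range apow"
        using 2 generate_apow_subset by blast
      then show ?thesis
        using apow_ne_apowb by (metis rangeE)
    next
      assume w_eq: "w = apowb j"
      then have "apowb i = apowb (j + n)"
        using 2 w(2) by (auto simp: generate_apowb)
      then show ?thesis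
        using w_eq by (auto dest: apowb_eq_apowb_add_n_swap)
    qed
  qed
next
  assume "w \<in> {\<one>, apow n, apowb (i + n)}"
  then show "power_adj G (apowb i) w"
    using apowb_ne_apowb_add_n by (auto simp: power_adj_def generate_apowb)
qed

lemma gdeg_apowb: "gdeg (carrier G) (power_adj G) (apowb i) = 3"
proof -
  have "{w \<in> carrier G. power_adj G (apowb i) w} = {\<one>, apow n, apowb (i + n)}"
    by (auto simp: power_adj_apowb_iff)
  then show ?thesis
    using apow_n_ne_one by (simp add: gdeg_def)
qed

lemma adjacent_twins_apowb: "adjacent_twins (carrier G) (power_adj G) (apowb i) (apowb (i + n))"
proof -
  have neighbours_partner: "power_adj G (apowb (i + n)) w \<longleftrightarrow> w \<in> {\<one>, apow n, apowb i}" for w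
    using power_adj_apowb_iff[of "i + n" w] unfolding apowb_add_n_add_n .
  have "power_adj G w (apowb i) \<longleftrightarrow> power_adj G w (apowb (i + n))"
    if "w \<notin> {apowb i, apowb (i + n)}" for w
    using that power_adj_apowb_iff[of i w] neighbours_partner[of w]
    by (simp add: power_adj_commute[of G w])
  then show ?thesis
    using power_adj_apowb_iff[of i] neighbours_partner by (simp add: adjacent_twins_def)
qed

lemma apowb_pairs_disjoint:
  fixes k l :: nat
  assumes "k < n" "l < n" "k \<noteq> l"
  shows "{apowb (int k), apowb (int k + int n)} \<inter> {apowb (int l), apowb (int l + int n)} = {}"
  using assms by (auto simp: apowb_eq_iff)

end

lemma gen_quaternion_group_of_is_gen_quaternion:
  assumes "is_gen_quaternion G n"
  obtains a b where "gen_quaternion_group G a b n"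
  using assms unfolding is_gen_quaternion_def
  by (auto intro: gen_quaternion_group.intro gen_quaternion_group_axioms.intro)

theorem theorem6p4:
  fixes G :: "('g, 'b) monoid_scheme" and n :: nat and u :: "nat \<Rightarrow> 'g"
  assumes "n \<ge> 2"
    and "is_gen_quaternion G n"
    and "bij_betw u {..<card (carrier G)} (carrier G)"
  shows "eigenvalue (sombor_matrix (carrier G) (power_adj G) u) (- 3 * sqrt 2)
     \<and> order (- 3 * sqrt 2) (char_poly (sombor_matrix (carrier G) (power_adj G) u)) \<ge> n"
proof -
  obtain a b where "gen_quaternion_group G a b n"
    using assms(2) by (rule gen_quaternion_group_of_is_gen_quaternion)
  then interpret Q: gen_quaternion_group G a b n .
  let ?A = "sombor_matrix (carrier G) (power_adj G) u"
  have "n \<le> order (- (sqrt 2 * real 3)) (char_poly ?A)"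
    by (rule order_char_poly_sombor_ge_twin_pairs
        [where p = "\<lambda>k. Q.apowb (int k)" and q = "\<lambda>k. Q.apowb (int k + int n)"])
      (assumption | rule assms(3) power_adj_irrefl Q.adjacent_twins_apowb Q.gdeg_apowb
        Q.apowb_pairs_disjoint)+
  then have order: "n \<le> order (- 3 * sqrt 2) (char_poly ?A)"
    by (simp add: mult.commute)
  have "?A \<in> carrier_mat (card (carrier G)) (card (carrier G))"
    by (simp add: sombor_matrix_def)
  then show ?thesis
    using order assms(1) by (simp add: eigenvalue_root_char_poly order_root)
qed

end
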